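(* Let $X$ be a Tychonoff space that is locally dense-pseudocompact. Then $X$ is discrete.
   Context: A space is pseudocompact if every continuous real-valued function on it is bounded. A space $Y$ is dense-pseudocompact if every dense subset of $Y$ (with the subspace topology) is pseudocompact. A space $X$ is locally dense-pseudocompact if for every $x\in X$ and every neighborhood $U$ of $x$ there is a neighborhood $V$ of $x$ with $V\subset U$ such that $V$ (as a subspace) is dense-pseudocompact. *)

theory Defs
  imports "HOL-Analysis.Analysis"
begin

definition tychonoff_space :: "'a topology \<Rightarrow> bool" where
  "tychonoff_space X \<longleftrightarrow> t1_space X \<and> completely_regular_space X"

definition pseudocompact_space :: "'a topology \<Rightarrow> bool" where
  "pseudocompact_space Y \<longleftrightarrow>
     (\<forall>f::'a \<Rightarrow> real. continuous_map Y euclideanreal f \<longrightarrow> bounded (f ` topspace Y))"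

definition dense_pseudocompact_space :: "'a topology \<Rightarrow> bool" where
  "dense_pseudocompact_space Y \<longleftrightarrow>
     (\<forall>D. D \<subseteq> topspace Y \<and> Y closure_of D = topspace Y
          \<longrightarrow> pseudocompact_space (subtopology Y D))"

text \<open>Neighbourhoods are open sets containing the point (Engelking's convention).\<close>
definition locally_dense_pseudocompact :: "'a topology \<Rightarrow> bool" where
  "locally_dense_pseudocompact X \<longleftrightarrow>
     (\<forall>x U. x \<in> U \<and> openin X U \<longrightarrow>
        (\<exists>V. openin X V \<and> x \<in> V \<and> V \<subseteq> U \<and> dense_pseudocompact_space (subtopology X V)))"

end

theory Submission
  imports Defs
begin

text \<open>
  If a point \<open>x\<close> of a Hausdorff space is not isolated, splitting off a nonempty open set
  from a shrinking sequence of open neighbourhoods of \<open>x\<close> yields infinitely many pairwise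
  disjoint nonempty open sets \<open>U\<^sub>n\<close>. Their union \<open>W\<close> together with the exterior of \<open>W\<close>
  is dense, and as a subspace it is partitioned into the open pieces \<open>U\<^sub>n\<close> and the exterior;
  the function equal to \<open>n\<close> on \<open>U\<^sub>n\<close> and \<open>0\<close> on the exterior is continuous and unbounded.
  Applied inside a dense-pseudocompact neighbourhood of a non-isolated point this is absurd.
\<close>

lemma Hausdorff_space_nonisolated_split:
  assumes "Hausdorff_space X" "\<not> openin X {x}" "openin X W" "x \<in> W"
  obtains P Q where "openin X P" "openin X Q" "P \<noteq> {}" "P \<subseteq> W" "Q \<subseteq> W" "x \<in> Q" "disjnt P Q"
proof -
  have "W \<noteq> {x}"
    using assms(2,3) by blast
  then obtain y where y: "y \<in> W" "y \<noteq> x"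
    using assms(4) by blast
  have "y \<in> topspace X" "x \<in> topspace X"
    using y(1) assms(3,4) openin_subset by blast+
  then obtain A B where "openin X A" "openin X B" "y \<in> A" "x \<in> B" "disjnt A B"
    using assms(1) y(2) unfolding Hausdorff_space_def by metis
  then show thesis
    using that[of "A \<inter> W" "B \<inter> W"] assms(3,4) y by (auto simp: disjnt_def)
qed

lemma Hausdorff_space_nonisolated_disjoint_family:
  assumes "Hausdorff_space X" "\<not> openin X {x}" "x \<in> topspace X"
  obtains U :: "nat \<Rightarrow> 'a set"
  where "disjoint_family U" "\<And>n. openin X (U n)" "\<And>n. U n \<noteq> {}"
proof -
  have "\<exists>N. \<forall>n. (openin X (N n) \<and> x \<in> N n) \<and> N (Suc n) \<subseteq> N n
          \<and> (\<exists>P. openin X P \<and> P \<noteq> {} \<and> P \<subseteq> N n \<and> disjnt P (N (Suc n)))"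
  proof (rule dependent_nat_choice)
    show "\<exists>W. openin X W \<and> x \<in> W"
      using assms(3) by blast
  next
    fix W and n :: nat
    assume "openin X W \<and> x \<in> W"
    then obtain P Q where "openin X P" "openin X Q" "P \<noteq> {}" "P \<subseteq> W" "Q \<subseteq> W" "x \<in> Q" "disjnt P Q"
      using Hausdorff_space_nonisolated_split[OF assms(1,2)] by blast
    then show "\<exists>Q. (openin X Q \<and> x \<in> Q) \<and> Q \<subseteq> W
          \<and> (\<exists>P. openin X P \<and> P \<noteq> {} \<and> P \<subseteq> W \<and> disjnt P Q)"
      by blast
  qed
  then obtain N where N_decr: "\<And>n. N (Suc n) \<subseteq> N n"
    and U_ex: "\<forall>n. \<exists>P. openin X P \<and> P \<noteq> {} \<and> P \<subseteq> N n \<and> disjnt P (N (Suc n))"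
    by blast
  have "\<exists>U. \<forall>n. openin X (U n) \<and> U n \<noteq> {} \<and> U n \<subseteq> N n \<and> disjnt (U n) (N (Suc n))"
    using U_ex by (rule choice)
  then obtain U where U: "\<And>n. openin X (U n) \<and> U n \<noteq> {} \<and> U n \<subseteq> N n \<and> disjnt (U n) (N (Suc n))"
    by blast
  have "decseq N"
    using N_decr by (rule decseq_SucI)
  have "disjnt (U n) (U m)" if "n < m" for m n
    using U[of n] U[of m] decseqD[OF \<open>decseq N\<close>, of "Suc n" m] that
    by (auto simp: disjnt_def)
  then have "disjoint_family U"
    unfolding disjoint_family_on_def by (metis disjnt_def disjnt_sym linorder_neq_iff)
  then show thesis
    by (rule that) (use U in auto)
qed

lemma pseudocompact_space_open_partition_finite:
  fixes T :: "nat \<Rightarrow> 'a set"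
  assumes "pseudocompact_space X" "disjoint_family T" "\<And>n. openin X (T n)"
    and "topspace X \<subseteq> (\<Union>n. T n)"
  shows "finite {n. T n \<noteq> {}}"
proof -
  obtain f where "continuous_map X euclideanreal f"
    and f_eq: "\<And>x n. x \<in> topspace X \<inter> T n \<Longrightarrow> f x = real n"
  proof (rule pasting_lemma_exists[where I=UNIV and f="\<lambda>n _. real n"])
    show "real i = real j" if "x \<in> topspace X \<inter> T i \<inter> T j" for i j x
      using assms(2) that by (auto simp: disjoint_family_on_def)
  qed (use assms(3,4) in auto)
  then obtain B where B: "\<And>x. x \<in> topspace X \<Longrightarrow> \<bar>f x\<bar> \<le> B"
    using assms(1) unfolding pseudocompact_space_def bounded_iff by fastforce
  have bound: "real n \<le> B" if nonempty: "T n \<noteq> {}" for n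
  proof -
    obtain x where "x \<in> T n"
      using nonempty by blast
    moreover have "x \<in> topspace X"
      using calculation openin_subset[OF assms(3)] by blast
    ultimately show ?thesis
      using B[of x] f_eq[of x n] by simp
  qed
  have "{n. T n \<noteq> {}} \<subseteq> {..nat \<lceil>B\<rceil>}"
  proof
    fix n
    assume "n \<in> {n. T n \<noteq> {}}"
    then have "real n \<le> B"
      by (simp add: bound)
    then show "n \<in> {..nat \<lceil>B\<rceil>}"
      by simp linarith
  qed
  then show ?thesis
    using finite_subset by blast
qed

lemma not_dense_pseudocompact_space_disjoint_family:
  fixes U :: "nat \<Rightarrow> 'a set"
  assumes "disjoint_family U" "\<And>n. openin Y (U n)" "\<And>n. U n \<noteq> {}"
  shows "\<not> dense_pseudocompact_space Y"
proof
  assume dpc: "dense_pseudocompact_space Y"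
  define W where "W = (\<Union>n. U n)"
  define T where "T = case_nat (topspace Y - Y closure_of W) U"
  define D where "D = (\<Union>n. T n)"
  have T_open: "openin Y (T n)" for n
    by (cases n) (auto simp: T_def assms(2))
  have U_closure: "U n \<subseteq> Y closure_of W" for n
    using closure_of_subset[of W Y] openin_subset[OF assms(2)] by (auto simp: W_def)
  have "disjoint_family T"
    using assms(1) U_closure
    by (fastforce simp: disjoint_family_on_def T_def split: nat.split)
  have "D = T 0 \<union> (\<Union>n. T (Suc n))"
    unfolding D_def by (metis UNIV_nat_eq UN_insert image_image)
  then have D_eq: "D = W \<union> (topspace Y - Y closure_of W)"
    by (auto simp: T_def W_def)
  have "D \<subseteq> topspace Y"
    using T_open openin_subset by (auto simp: D_def)
  moreover have "Y closure_of D = topspace Y"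
    using closure_of_subset[of "topspace Y - Y closure_of W" Y] closure_of_subset_topspace[of Y]
    by (auto simp: D_eq)
  ultimately have "pseudocompact_space (subtopology Y D)"
    using dpc by (simp add: dense_pseudocompact_space_def)
  moreover have "openin (subtopology Y D) (T n)" for n
    using T_open[of n] by (auto simp: openin_subtopology D_def)
  ultimately have "finite {n. T n \<noteq> {}}"
    using \<open>disjoint_family T\<close> by (intro pseudocompact_space_open_partition_finite) (auto simp: D_def)
  moreover have "range Suc \<subseteq> {n. T n \<noteq> {}}"
    using assms(3) by (auto simp: T_def)
  ultimately show False
    by (meson finite_subset finite_imageD inj_Suc infinite_UNIV_nat)
qed

theorem mainTheorem5:
  fixes X :: "'a topology"
  assumes "tychonoff_space X" and "locally_dense_pseudocompact X"
  shows "X = discrete_topology (topspace X)"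
proof (rule ccontr)
  assume "X \<noteq> discrete_topology (topspace X)"
  then obtain x where x: "x \<in> topspace X" "\<not> openin X {x}"
    by (metis discrete_topology_unique)
  obtain V where V: "openin X V" "x \<in> V" "dense_pseudocompact_space (subtopology X V)"
    using assms(2) x(1) unfolding locally_dense_pseudocompact_def by blast
  have "Hausdorff_space X"
    using assms(1) completely_regular_imp_regular_space regular_t1_imp_Hausdorff_space
    by (auto simp: tychonoff_space_def)
  then have "Hausdorff_space (subtopology X V)"
    by (rule Hausdorff_space_subtopology)
  moreover have "\<not> openin (subtopology X V) {x}"
    using x(2) V(1) openin_trans_full by blast
  ultimately obtain U :: "nat \<Rightarrow> 'a set"
    where "disjoint_family U" "\<And>n. openin (subtopology X V) (U n)" "\<And>n. U n \<noteq> {}"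
    using Hausdorff_space_nonisolated_disjoint_family x(1) V(2) by (metis IntI topspace_subtopology)
  then show False
    using not_dense_pseudocompact_space_disjoint_family V(3) by blast
qed

end
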